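(* Let $R$ be a real number with $|R|>1$, let $B\subset\mathbb{R}$ be a finite set with $0\in B$ and $N=\#B$, let $\tau_b(x)=R^{-1}(x+b)$ for $b\in B$, let $X_B$ be the attractor of $(\tau_b)_{b\in B}$, and let $(p_b)_{b\in B}$ be probabilities with $p_b\in(0,1)$ and $\sum_{b\in B}p_b=1$. Let $\mu=\mu_{B,p}$ be the invariant measure. Suppose $\mu$ is spectral and that there is no overlap, i.e. $\mu(\tau_b(X_B)\cap\tau_{b'}(X_B))=0$ for all $b\neq b'$ in $B$. Then $p_b=\frac1N$ for all $b\in B$.
   Context: The attractor $X_B$ is the unique nonempty compact set with $X_B=\bigcup_{b\in B}\tau_b(X_B)$. The invariant measure $\mu_{B,p}$ is the unique Borel probability measure with $\int f\,d\mu_{B,p}=\sum_{b\in B}p_b\int f\circ\tau_b\,d\mu_{B,p}$ for all continuous $f$; its support is $X_B$. With $e_\lambda(x)=e^{2\pi i\lambda x}$, a Borel probability measure $\mu$ is spectral if there is $\Lambda\subset\mathbb{R}$ such that $\{e_\lambda\}_{\lambda\in\Lambda}$ is an orthogonal basis of $L^2(\mu)$. *)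

theory Defs
  imports "HOL-Probability.Probability"
begin

definition tau :: "real \<Rightarrow> real \<Rightarrow> real \<Rightarrow> real" where
  "tau R b x = (x + b) / R"

definition ifs_attractor :: "real \<Rightarrow> real set \<Rightarrow> real set \<Rightarrow> bool" where
  "ifs_attractor R B X \<longleftrightarrow> X \<noteq> {} \<and> compact X \<and> X = (\<Union>b\<in>B. tau R b ` X)"

definition ifs_invariant_measure ::
  "real \<Rightarrow> real set \<Rightarrow> (real \<Rightarrow> real) \<Rightarrow> real measure \<Rightarrow> bool" where
  "ifs_invariant_measure R B p \<mu> \<longleftrightarrow>
     prob_space \<mu> \<and> sets \<mu> = sets borel \<and>
     (\<forall>f :: real \<Rightarrow> real. continuous_on UNIV f \<longrightarrow>
        (\<integral>x. f x \<partial>\<mu>) = (\<Sum>b\<in>B. p b * (\<integral>x. f (tau R b x) \<partial>\<mu>)))"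

definition e_exp :: "real \<Rightarrow> real \<Rightarrow> complex" where
  "e_exp l x = exp (2 * of_real pi * \<i> * of_real (l * x))"

text \<open>Spectral measure: some family {e_lambda}_{lambda in Lambda} is an orthogonal basis
  of L^2(mu), i.e. it is pairwise orthogonal in L^2(mu) and complete (the only
  L^2 function orthogonal to all of them is 0 mu-a.e.).  Each e_lambda has
  modulus 1, hence norm 1 in L^2(mu) for a probability measure.\<close>
definition spectral_measure :: "real measure \<Rightarrow> bool" where
  "spectral_measure \<mu> \<longleftrightarrow>
     (\<exists>\<Lambda> :: real set.
        (\<forall>l\<in>\<Lambda>. \<forall>l'\<in>\<Lambda>. l \<noteq> l' \<longrightarrow>
            (\<integral>x. e_exp l x * cnj (e_exp l' x) \<partial>\<mu>) = 0) \<and>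
        (\<forall>f :: real \<Rightarrow> complex.
            f \<in> borel_measurable \<mu> \<and> integrable \<mu> (\<lambda>x. (cmod (f x))\<^sup>2) \<and>
            (\<forall>l\<in>\<Lambda>. (\<integral>x. f x * cnj (e_exp l x) \<partial>\<mu>) = 0)
            \<longrightarrow> (AE x in \<mu>. f x = 0)))"

end

theory Submission
  imports Defs
begin

text \<open>Let \<open>\<Lambda>\<close> be a spectrum of \<open>\<mu>\<close>. Without overlap, the restriction of \<open>\<mu>\<close> to the piece
  \<open>\<tau>\<^sub>b(X\<^sub>B)\<close> is \<open>p\<^sub>b\<close> times the image of \<open>\<mu>\<close> under \<open>\<tau>\<^sub>b\<close>, so the Fourier coefficients of the
  indicator of that piece with respect to \<open>e\<^sub>\<lambda>\<close> have modulus \<open>p\<^sub>b |\<psi>(\<lambda>)|\<close> with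
  \<open>\<psi>(\<lambda>) = \<integral> e\<^sub>-\<^sub>\<lambda>\<^sub>/\<^sub>R d\<mu>\<close>, independent of \<open>b\<close>. Parseval's identity for the orthonormal basis
  \<open>(e\<^sub>\<lambda>)\<^sub>\<lambda>\<^sub>\<in>\<^sub>\<Lambda>\<close> then gives \<open>p\<^sub>b\<^sup>2 \<Sum>\<^sub>\<lambda> |\<psi>(\<lambda>)|\<^sup>2 = \<mu>(\<tau>\<^sub>b(X\<^sub>B)) = p\<^sub>b\<close>, so \<open>1/p\<^sub>b\<close> does not
  depend on \<open>b\<close>. Parseval's identity itself follows from completeness by a Riesz--Fischer
  argument: the partial expansions of a bounded \<open>f\<close> converge in \<open>L\<^sup>2\<close> to some \<open>g\<close>, and \<open>f - g\<close>
  is orthogonal to every \<open>e\<^sub>\<lambda>\<close>, hence zero.\<close>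

lemma borel_measurable_cnj[measurable (raw)]:
  assumes "f \<in> borel_measurable M"
  shows "(\<lambda>x. cnj (f x :: complex)) \<in> borel_measurable M"
  by (intro borel_measurable_continuous_on[OF _ assms] continuous_intros)

lemma norm_diff_sq_le: "(norm (a - b))\<^sup>2 \<le> 2 * (norm a)\<^sup>2 + 2 * (norm (b :: 'a :: real_normed_vector))\<^sup>2"
proof -
  have "(norm (a - b))\<^sup>2 \<le> (norm a + norm b)\<^sup>2"
    by (intro power_mono norm_triangle_ineq4) auto
  also have "\<dots> \<le> 2 * (norm a)\<^sup>2 + 2 * (norm b)\<^sup>2"
    using sum_squares_ge_zero[of "norm a - norm b" 0] by (simp add: power2_eq_square algebra_simps)
  finally show ?thesis .
qed

section \<open>Square-integrable functions\<close>

definition bounded_measurable :: "'a measure \<Rightarrow> ('a \<Rightarrow> complex) \<Rightarrow> bool" where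
  "bounded_measurable M u \<longleftrightarrow> u \<in> borel_measurable M \<and> (\<exists>K. \<forall>x. cmod (u x) \<le> K)"

definition L2_sq :: "'a measure \<Rightarrow> ('a \<Rightarrow> complex) \<Rightarrow> ennreal" where
  "L2_sq M u = (\<integral>\<^sup>+x. ennreal ((cmod (u x))\<^sup>2) \<partial>M)"

lemma bounded_measurable_add:
  "bounded_measurable M u \<Longrightarrow> bounded_measurable M v \<Longrightarrow> bounded_measurable M (\<lambda>x. u x + v x)"
  unfolding bounded_measurable_def by (auto intro!: exI[of _ "_ + _"] add_mono norm_triangle_le)

lemma bounded_measurable_diff:
  "bounded_measurable M u \<Longrightarrow> bounded_measurable M v \<Longrightarrow> bounded_measurable M (\<lambda>x. u x - v x)"
  unfolding bounded_measurable_def by (auto intro!: exI[of _ "_ + _"] add_mono norm_triangle_le_diff)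

lemma bounded_measurable_mult:
  "bounded_measurable M u \<Longrightarrow> bounded_measurable M v \<Longrightarrow> bounded_measurable M (\<lambda>x. u x * v x)"
  unfolding bounded_measurable_def by (auto simp: norm_mult intro!: exI[of _ "_ * _"] mult_mono')

lemma bounded_measurable_cnj: "bounded_measurable M u \<Longrightarrow> bounded_measurable M (\<lambda>x. cnj (u x))"
  unfolding bounded_measurable_def by auto

lemma bounded_measurable_const: "bounded_measurable M (\<lambda>x. c)"
  unfolding bounded_measurable_def by auto

lemma bounded_measurable_sum:
  "(\<And>i. i \<in> I \<Longrightarrow> bounded_measurable M (u i)) \<Longrightarrow> bounded_measurable M (\<lambda>x. \<Sum>i\<in>I. u i x)"
  by (induction I rule: infinite_finite_induct) (auto intro: bounded_measurable_const bounded_measurable_add)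

lemma (in finite_measure) integrable_bounded_measurable: "bounded_measurable M u \<Longrightarrow> integrable M u"
  unfolding bounded_measurable_def by (auto intro: integrable_const_bound)

lemma (in finite_measure) integrable_sq_norm_bounded_measurable:
  assumes "bounded_measurable M u"
  shows "integrable M (\<lambda>x. (cmod (u x))\<^sup>2)"
proof -
  from assms obtain K where [measurable]: "u \<in> borel_measurable M" and K: "\<And>x. cmod (u x) \<le> K"
    unfolding bounded_measurable_def by auto
  show ?thesis
    by (rule integrable_const_bound[where B="K\<^sup>2"]) (auto intro!: power_mono K)
qed

lemma (in finite_measure) L2_sq_bounded_measurable:
  "bounded_measurable M u \<Longrightarrow> L2_sq M u = ennreal (\<integral>x. (cmod (u x))\<^sup>2 \<partial>M)"
  unfolding L2_sq_def by (intro nn_integral_eq_integral integrable_sq_norm_bounded_measurable) auto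

lemma L2_sq_diff_le:
  assumes [measurable]: "u \<in> borel_measurable M" "v \<in> borel_measurable M"
  shows "L2_sq M (\<lambda>x. u x - v x) \<le> 2 * L2_sq M u + 2 * L2_sq M v"
proof -
  have "L2_sq M (\<lambda>x. u x - v x)
      \<le> (\<integral>\<^sup>+x. 2 * ennreal ((cmod (u x))\<^sup>2) + 2 * ennreal ((cmod (v x))\<^sup>2) \<partial>M)"
    unfolding L2_sq_def
  proof (intro nn_integral_mono)
    fix x
    have "ennreal ((cmod (u x - v x))\<^sup>2) \<le> ennreal (2 * (cmod (u x))\<^sup>2 + 2 * (cmod (v x))\<^sup>2)"
      by (intro ennreal_leI norm_diff_sq_le)
    then show "ennreal ((cmod (u x - v x))\<^sup>2) \<le> 2 * ennreal ((cmod (u x))\<^sup>2) + 2 * ennreal ((cmod (v x))\<^sup>2)"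
      by (simp add: ennreal_plus ennreal_mult)
  qed
  also have "\<dots> = 2 * L2_sq M u + 2 * L2_sq M v"
    unfolding L2_sq_def by (subst nn_integral_add) (auto simp: nn_integral_cmult)
  finally show ?thesis .
qed

lemma (in prob_space) nn_integral_norm_le_of_L2_sq_le:
  assumes [measurable]: "u \<in> borel_measurable M" and "e > 0" and "L2_sq M u \<le> ennreal (e\<^sup>2)"
  shows "(\<integral>\<^sup>+x. ennreal (cmod (u x)) \<partial>M) \<le> ennreal e"
proof -
  \<comment> \<open>AM-GM: \<open>|u| \<le> e/2 + |u|\<^sup>2/(2e)\<close>\<close>
  have "cmod (u x) \<le> e/2 + 1/(2*e) * (cmod (u x))\<^sup>2" for x
  proof -
    have "2 * e * cmod (u x) \<le> e\<^sup>2 + (cmod (u x))\<^sup>2"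
      using sum_squares_ge_zero[of "cmod (u x) - e" 0] by (simp add: power2_eq_square algebra_simps)
    then show ?thesis using \<open>e > 0\<close> by (simp add: field_simps power2_eq_square)
  qed
  then have "(\<integral>\<^sup>+x. ennreal (cmod (u x)) \<partial>M)
      \<le> (\<integral>\<^sup>+x. ennreal (e/2) + ennreal (1/(2*e)) * ennreal ((cmod (u x))\<^sup>2) \<partial>M)"
    using \<open>e > 0\<close> by (intro nn_integral_mono) (simp add: ennreal_leI flip: ennreal_plus ennreal_mult)
  also have "\<dots> = ennreal (e/2) + ennreal (1/(2*e)) * L2_sq M u"
    unfolding L2_sq_def by (subst nn_integral_add) (auto simp: nn_integral_cmult emeasure_space_1)
  also have "\<dots> \<le> ennreal (e/2) + ennreal (1/(2*e)) * ennreal (e\<^sup>2)"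
    by (intro add_left_mono mult_left_mono assms) auto
  also have "\<dots> = ennreal e"
    using \<open>e > 0\<close> by (simp add: field_simps power2_eq_square flip: ennreal_plus ennreal_mult)
  finally show ?thesis .
qed

lemma quarter_power: "(1/4::real)^k = ((1/2)^k)\<^sup>2"
  by (simp add: power2_eq_square flip: power_mult_distrib)

lemma AE_convergent_of_nn_integral_diff_le:
  fixes G :: "nat \<Rightarrow> 'a \<Rightarrow> complex"
  assumes [measurable]: "\<And>k. G k \<in> borel_measurable M"
    and diff: "\<And>k. (\<integral>\<^sup>+x. ennreal (cmod (G (Suc k) x - G k x)) \<partial>M) \<le> ennreal ((1/2)^k)"
  shows "AE x in M. convergent (\<lambda>k. G k x)"
proof -
  have "(\<integral>\<^sup>+x. (\<Sum>k. ennreal (cmod (G (Suc k) x - G k x))) \<partial>M)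
      = (\<Sum>k. \<integral>\<^sup>+x. ennreal (cmod (G (Suc k) x - G k x)) \<partial>M)"
    by (rule nn_integral_suminf) measurable
  also have "\<dots> \<le> (\<Sum>k. ennreal ((1/2)^k))"
    by (intro suminf_le diff) auto
  also have "\<dots> = ennreal 2"
    by (subst suminf_ennreal2) (auto simp: suminf_geometric)
  finally have "AE x in M. (\<Sum>k. ennreal (cmod (G (Suc k) x - G k x))) \<noteq> \<infinity>"
    by (intro nn_integral_PInf_AE) (auto simp: top_unique)
  then show ?thesis
  proof eventually_elim
    case (elim x)
    then have "summable (\<lambda>k. cmod (G (Suc k) x - G k x))"
      by (intro summable_suminf_not_top) auto
    then have "summable (\<lambda>k. G (Suc k) x - G k x)"
      by (rule summable_norm_cancel)
    then have "convergent (\<lambda>n. G 0 x + (\<Sum>k<n. G (Suc k) x - G k x))"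
      by (intro convergent_add convergent_const) (simp add: summable_iff_convergent)
    then show ?case by (simp add: sum_lessThan_telescope[of "\<lambda>k. G k x"])
  qed
qed

text \<open>Riesz--Fischer for a fast Cauchy sequence: the pointwise limit along the sequence exists
  almost everywhere, and Fatou's lemma bounds its distance to the sequence.\<close>

lemma (in prob_space) fast_L2_Cauchy_has_limit:
  fixes G :: "nat \<Rightarrow> 'a \<Rightarrow> complex"
  assumes [measurable]: "\<And>k. G k \<in> borel_measurable M"
    and Cauchy: "\<And>k j. k \<le> j \<Longrightarrow> L2_sq M (\<lambda>x. G j x - G k x) \<le> ennreal ((1/4)^k)"
  obtains g where "g \<in> borel_measurable M" "\<And>k. L2_sq M (\<lambda>x. g x - G k x) \<le> ennreal ((1/4)^k)"
proof
  define g where "g x = lim (\<lambda>k. G k x)" for x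
  show [measurable]: "g \<in> borel_measurable M"
    unfolding g_def by measurable
  have "AE x in M. convergent (\<lambda>k. G k x)"
    using Cauchy[of _ "Suc _"]
    by (intro AE_convergent_of_nn_integral_diff_le nn_integral_norm_le_of_L2_sq_le) (auto simp: quarter_power)
  then have conv: "AE x in M. (\<lambda>j. G j x) \<longlonglongrightarrow> g x"
    by eventually_elim (simp add: g_def convergent_LIMSEQ_iff)
  fix k
  have "L2_sq M (\<lambda>x. g x - G k x) = (\<integral>\<^sup>+x. liminf (\<lambda>j. ennreal ((cmod (G j x - G k x))\<^sup>2)) \<partial>M)"
    unfolding L2_sq_def
  proof (intro nn_integral_cong_AE)
    show "AE x in M. ennreal ((cmod (g x - G k x))\<^sup>2) = liminf (\<lambda>j. ennreal ((cmod (G j x - G k x))\<^sup>2))"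
      using conv
    proof eventually_elim
      case (elim x)
      have "(\<lambda>j. ennreal ((cmod (G j x - G k x))\<^sup>2)) \<longlonglongrightarrow> ennreal ((cmod (g x - G k x))\<^sup>2)"
        by (intro tendsto_ennrealI tendsto_intros elim)
      from lim_imp_Liminf[OF _ this] show ?case by simp
    qed
  qed
  also have "\<dots> \<le> liminf (\<lambda>j. L2_sq M (\<lambda>x. G j x - G k x))"
    unfolding L2_sq_def by (rule nn_integral_liminf) measurable
  also have "\<dots> \<le> ennreal ((1/4)^k)"
    by (rule Liminf_le) (auto intro!: eventually_sequentiallyI[of k] Cauchy)
  finally show "L2_sq M (\<lambda>x. g x - G k x) \<le> ennreal ((1/4)^k)" .
qed

section \<open>Orthonormal systems and Parseval's identity\<close>

lemma nonneg_summable_on_small_tail: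
  fixes w :: "'i \<Rightarrow> real"
  assumes "w summable_on A" "\<And>x. x \<in> A \<Longrightarrow> 0 \<le> w x" "e > 0"
  obtains F where "finite F" "F \<subseteq> A" "\<And>H. finite H \<Longrightarrow> H \<subseteq> A \<Longrightarrow> H \<inter> F = {} \<Longrightarrow> sum w H \<le> e"
proof -
  obtain F where F: "finite F" "F \<subseteq> A" "dist (sum w F) (infsum w A) \<le> e"
    using has_sum_finite_approximation[OF has_sum_infsum[OF assms(1)] assms(3)] by blast
  have "sum w H \<le> e" if H: "finite H" "H \<subseteq> A" "H \<inter> F = {}" for H
  proof -
    have "sum w H + sum w F = infsum w (H \<union> F)"
      using H F by (simp add: sum.union_disjoint)
    also have "\<dots> \<le> infsum w A"
      using H F assms by (intro infsum_mono2) auto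
    finally show ?thesis using F(3) by (simp add: dist_real_def)
  qed
  with F show ?thesis using that by blast
qed

lemma nonneg_summable_on_nested_small_tails:
  fixes w :: "'i \<Rightarrow> real"
  assumes "w summable_on A" "\<And>x. x \<in> A \<Longrightarrow> 0 \<le> w x"
  obtains F :: "nat \<Rightarrow> 'i set" where "\<And>k. finite (F k)" "\<And>k. F k \<subseteq> A" "incseq F"
    "\<And>k H. finite H \<Longrightarrow> H \<subseteq> A \<Longrightarrow> H \<inter> F k = {} \<Longrightarrow> sum w H \<le> (1/4)^k"
proof -
  have "\<exists>F. finite F \<and> F \<subseteq> A \<and> (\<forall>H. finite H \<and> H \<subseteq> A \<and> H \<inter> F = {} \<longrightarrow> sum w H \<le> (1/4)^k)"
    for k :: nat
    by (rule nonneg_summable_on_small_tail[OF assms, of "(1/4)^k"]) auto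
  then obtain Fk where Fk: "\<And>k. finite (Fk k) \<and> Fk k \<subseteq> A \<and>
      (\<forall>H. finite H \<and> H \<subseteq> A \<and> H \<inter> Fk k = {} \<longrightarrow> sum w H \<le> (1/4)^k)"
    by metis
  show ?thesis
  proof
    show "finite (\<Union>j\<le>k. Fk j)" "(\<Union>j\<le>k. Fk j) \<subseteq> A" for k
      using Fk by auto
    show "incseq (\<lambda>k. \<Union>j\<le>k. Fk j)"
      unfolding incseq_def by (intro allI impI UN_mono) auto
    show "sum w H \<le> (1/4)^k" if "finite H" "H \<subseteq> A" "H \<inter> (\<Union>j\<le>k. Fk j) = {}" for H k
      using that Fk[of k] by blast
  qed
qed

locale orthonormal_system = prob_space +
  fixes E :: "'i \<Rightarrow> 'a \<Rightarrow> complex" and \<Lambda> :: "'i set"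
  assumes measurable_E[measurable]: "\<And>l. E l \<in> borel_measurable M"
    and norm_E: "\<And>l x. cmod (E l x) = 1"
    and orthogonal: "\<And>l l'. l \<in> \<Lambda> \<Longrightarrow> l' \<in> \<Lambda> \<Longrightarrow> l \<noteq> l' \<Longrightarrow> (\<integral>x. E l x * cnj (E l' x) \<partial>M) = 0"
begin

definition coeff :: "('a \<Rightarrow> complex) \<Rightarrow> 'i \<Rightarrow> complex" where
  "coeff u l = (\<integral>x. u x * cnj (E l x) \<partial>M)"

lemma bounded_measurable_E: "bounded_measurable M (E l)"
  unfolding bounded_measurable_def using norm_E by auto

lemmas bounded_measurable_intros =
  bounded_measurable_E bounded_measurable_const bounded_measurable_add bounded_measurable_diff
  bounded_measurable_mult bounded_measurable_cnj bounded_measurable_sum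

lemma integral_E_cnj_E:
  assumes "l \<in> \<Lambda>" "l' \<in> \<Lambda>"
  shows "(\<integral>x. E l x * cnj (E l' x) \<partial>M) = (if l = l' then 1 else 0)"
proof -
  have "E l x * cnj (E l x) = 1" for x
    by (metis norm_E complex_norm_square of_real_1 power_one)
  then show ?thesis using orthogonal assms by (cases "l = l'") (simp_all add: prob_space)
qed

lemma coeff_sum:
  assumes "finite F" "F \<subseteq> \<Lambda>" "l \<in> \<Lambda>"
  shows "coeff (\<lambda>x. \<Sum>l'\<in>F. d l' * E l' x) l = (if l \<in> F then d l else 0)"
proof -
  have "coeff (\<lambda>x. \<Sum>l'\<in>F. d l' * E l' x) l = (\<Sum>l'\<in>F. d l' * (\<integral>x. E l' x * cnj (E l x) \<partial>M))"
    unfolding coeff_def sum_distrib_right mult.assoc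
    by (subst Bochner_Integration.integral_sum) (auto intro!: integrable_bounded_measurable bounded_measurable_intros)
  also have "\<dots> = (\<Sum>l'\<in>F. if l' = l then d l else 0)"
    using assms by (intro sum.cong) (auto simp: integral_E_cnj_E subsetD)
  finally show ?thesis using assms by simp
qed

lemma coeff_diff:
  "bounded_measurable M u \<Longrightarrow> bounded_measurable M v \<Longrightarrow> coeff (\<lambda>x. u x - v x) l = coeff u l - coeff v l"
  unfolding coeff_def left_diff_distrib
  by (intro Bochner_Integration.integral_diff integrable_bounded_measurable bounded_measurable_intros)

lemma integral_mult_cnj_sum:
  assumes "bounded_measurable M u" "finite F"
  shows "(\<integral>x. u x * cnj (\<Sum>l\<in>F. d l * E l x) \<partial>M) = (\<Sum>l\<in>F. cnj (d l) * coeff u l)"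
proof -
  have "(\<integral>x. u x * cnj (\<Sum>l\<in>F. d l * E l x) \<partial>M) = (\<integral>x. (\<Sum>l\<in>F. cnj (d l) * (u x * cnj (E l x))) \<partial>M)"
    by (simp add: cnj_sum sum_distrib_left ac_simps)
  also have "\<dots> = (\<Sum>l\<in>F. cnj (d l) * coeff u l)"
    unfolding coeff_def by (subst Bochner_Integration.integral_sum)
      (auto intro!: integrable_bounded_measurable bounded_measurable_intros assms)
  finally show ?thesis .
qed

lemma integral_sq_norm_sum:
  assumes "finite F" "F \<subseteq> \<Lambda>"
  shows "(\<integral>x. (cmod (\<Sum>l\<in>F. d l * E l x))\<^sup>2 \<partial>M) = (\<Sum>l\<in>F. (cmod (d l))\<^sup>2)"
proof -
  have "complex_of_real (\<integral>x. (cmod (\<Sum>l\<in>F. d l * E l x))\<^sup>2 \<partial>M)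
      = (\<integral>x. (\<Sum>l\<in>F. d l * E l x) * cnj (\<Sum>l\<in>F. d l * E l x) \<partial>M)"
    by (simp only: integral_complex_of_real[symmetric] complex_norm_square)
  also have "\<dots> = (\<Sum>l\<in>F. cnj (d l) * coeff (\<lambda>x. \<Sum>l\<in>F. d l * E l x) l)"
    by (intro integral_mult_cnj_sum bounded_measurable_intros assms)
  also have "\<dots> = (\<Sum>l\<in>F. cnj (d l) * d l)"
    using assms by (intro sum.cong) (auto simp: coeff_sum subsetD)
  also have "\<dots> = complex_of_real (\<Sum>l\<in>F. (cmod (d l))\<^sup>2)"
    by (simp add: mult.commute[of "cnj _"] complex_mult_cnj cmod_power2)
  finally show ?thesis by (simp only: of_real_eq_iff)
qed

lemma integral_sq_norm_diff_sum:
  assumes u: "bounded_measurable M u" and F: "finite F" "F \<subseteq> \<Lambda>"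
  shows "(\<integral>x. (cmod (u x - (\<Sum>l\<in>F. d l * E l x)))\<^sup>2 \<partial>M)
     = (\<integral>x. (cmod (u x))\<^sup>2 \<partial>M) - 2 * Re (\<Sum>l\<in>F. cnj (d l) * coeff u l) + (\<Sum>l\<in>F. (cmod (d l))\<^sup>2)"
proof -
  define v where "v x = (\<Sum>l\<in>F. d l * E l x)" for x
  have v: "bounded_measurable M v"
    unfolding v_def by (intro bounded_measurable_intros)
  define c where "c x = u x * cnj (v x)" for x
  have c: "integrable M c"
    unfolding c_def by (intro integrable_bounded_measurable bounded_measurable_intros u v)
  have "(cmod (u x - v x))\<^sup>2 = (cmod (u x))\<^sup>2 - 2 * Re (c x) + (cmod (v x))\<^sup>2" for x
    unfolding c_def by (simp add: cmod_power2 power2_diff algebra_simps)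
  then have "(\<integral>x. (cmod (u x - v x))\<^sup>2 \<partial>M)
      = (\<integral>x. (cmod (u x))\<^sup>2 \<partial>M) - 2 * Re (\<integral>x. c x \<partial>M) + (\<integral>x. (cmod (v x))\<^sup>2 \<partial>M)"
    using u v c by (simp add: integrable_sq_norm_bounded_measurable)
  then show ?thesis
    by (simp only: c_def v_def integral_mult_cnj_sum[OF u F(1)] integral_sq_norm_sum[OF F])
qed

lemma integral_sq_norm_diff_partial_expansion:
  assumes "bounded_measurable M u" "finite F" "F \<subseteq> \<Lambda>"
  shows "(\<integral>x. (cmod (u x - (\<Sum>l\<in>F. coeff u l * E l x)))\<^sup>2 \<partial>M)
     = (\<integral>x. (cmod (u x))\<^sup>2 \<partial>M) - (\<Sum>l\<in>F. (cmod (coeff u l))\<^sup>2)"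
proof -
  have "Re (\<Sum>l\<in>F. cnj (coeff u l) * coeff u l) = (\<Sum>l\<in>F. (cmod (coeff u l))\<^sup>2)"
    by (simp add: Re_sum cmod_power2 flip: power2_eq_square)
  then show ?thesis using integral_sq_norm_diff_sum[OF assms, of "coeff u"] by simp
qed

lemma bessel_inequality:
  assumes "bounded_measurable M u" "finite F" "F \<subseteq> \<Lambda>"
  shows "(\<Sum>l\<in>F. (cmod (coeff u l))\<^sup>2) \<le> (\<integral>x. (cmod (u x))\<^sup>2 \<partial>M)"
proof -
  have "0 \<le> (\<integral>x. (cmod (u x - (\<Sum>l\<in>F. coeff u l * E l x)))\<^sup>2 \<partial>M)"
    by (rule integral_nonneg_AE) auto
  then show ?thesis using integral_sq_norm_diff_partial_expansion[OF assms] by simp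
qed

lemma norm_coeff_partial_expansion_remainder_le:
  assumes "bounded_measurable M u" "finite F" "F \<subseteq> \<Lambda>" "l \<in> \<Lambda>" "0 \<le> e"
    and "l \<notin> F \<Longrightarrow> cmod (coeff u l) \<le> e"
  shows "cmod (coeff (\<lambda>x. u x - (\<Sum>l'\<in>F. coeff u l' * E l' x)) l) \<le> e"
  using assms by (simp add: coeff_diff coeff_sum bounded_measurable_intros)

lemma norm_integral_mult_cnj_E_le:
  assumes [measurable]: "u \<in> borel_measurable M" and "0 \<le> e"
    and bound: "(\<integral>\<^sup>+x. ennreal (cmod (u x)) \<partial>M) \<le> ennreal e"
  shows "integrable M (\<lambda>x. u x * cnj (E l x))" "cmod (\<integral>x. u x * cnj (E l x) \<partial>M) \<le> e"
proof -
  have eq: "(\<integral>\<^sup>+x. ennreal (cmod (u x * cnj (E l x))) \<partial>M) = (\<integral>\<^sup>+x. ennreal (cmod (u x)) \<partial>M)"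
    by (simp add: norm_mult norm_E)
  show int: "integrable M (\<lambda>x. u x * cnj (E l x))"
    using bound by (subst integrable_iff_bounded) (auto simp: eq le_less_trans)
  have "ennreal (cmod (\<integral>x. u x * cnj (E l x) \<partial>M)) \<le> ennreal e"
    using integral_norm_bound_ennreal[OF int] bound by (simp add: eq)
  then show "cmod (\<integral>x. u x * cnj (E l x) \<partial>M) \<le> e"
    using \<open>0 \<le> e\<close> by simp
qed

lemma L2_sq_diff_sums_le:
  assumes F: "\<And>k. finite (F k)" "\<And>k. F k \<subseteq> \<Lambda>" "incseq F"
    and tails: "\<And>k H. finite H \<Longrightarrow> H \<subseteq> \<Lambda> \<Longrightarrow> H \<inter> F k = {} \<Longrightarrow> (\<Sum>l\<in>H. (cmod (d l))\<^sup>2) \<le> (1/4)^k"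
    and "k \<le> j"
  shows "L2_sq M (\<lambda>x. (\<Sum>l\<in>F j. d l * E l x) - (\<Sum>l\<in>F k. d l * E l x)) \<le> ennreal ((1/4)^k)"
proof -
  have "(\<Sum>l\<in>F j. d l * E l x) - (\<Sum>l\<in>F k. d l * E l x) = (\<Sum>l\<in>F j - F k. d l * E l x)" for x
    using F(1,3) \<open>k \<le> j\<close> by (simp add: sum_diff incseq_def)
  then have "L2_sq M (\<lambda>x. (\<Sum>l\<in>F j. d l * E l x) - (\<Sum>l\<in>F k. d l * E l x))
      = ennreal (\<integral>x. (cmod (\<Sum>l\<in>F j - F k. d l * E l x))\<^sup>2 \<partial>M)"
    by (simp add: L2_sq_bounded_measurable bounded_measurable_intros)
  also have "\<dots> = ennreal (\<Sum>l\<in>F j - F k. (cmod (d l))\<^sup>2)"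
    using F by (subst integral_sq_norm_sum) auto
  also have "\<dots> \<le> ennreal ((1/4)^k)"
    using F by (intro ennreal_leI tails) auto
  finally show ?thesis .
qed

lemma coeff_remainder_L2_limit_eq_0:
  assumes f: "bounded_measurable M f"
    and F: "\<And>k. finite (F k)" "\<And>k. F k \<subseteq> \<Lambda>"
    and tails: "\<And>k H. finite H \<Longrightarrow> H \<subseteq> \<Lambda> \<Longrightarrow> H \<inter> F k = {} \<Longrightarrow> (\<Sum>l\<in>H. (cmod (coeff f l))\<^sup>2) \<le> (1/4)^k"
    and [measurable]: "g \<in> borel_measurable M"
    and g: "\<And>k. L2_sq M (\<lambda>x. g x - (\<Sum>l\<in>F k. coeff f l * E l x)) \<le> ennreal ((1/4)^k)"
    and l: "l \<in> \<Lambda>"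
  shows "coeff (\<lambda>x. f x - g x) l = 0"
proof -
  have bound: "cmod (coeff (\<lambda>x. f x - g x) l) \<le> 2 * (1/2)^k" for k
  proof -
    define G where "G x = (\<Sum>l\<in>F k. coeff f l * E l x)" for x
    have G: "bounded_measurable M G"
      unfolding G_def by (intro bounded_measurable_intros)
    then have [measurable]: "G \<in> borel_measurable M"
      by (simp add: bounded_measurable_def)
    have gG_measurable: "(\<lambda>x. g x - G x) \<in> borel_measurable M"
      by measurable
    have "(\<integral>\<^sup>+x. ennreal (cmod (g x - G x)) \<partial>M) \<le> ennreal ((1/2)^k)"
      using g[of k, folded G_def] by (intro nn_integral_norm_le_of_L2_sq_le) (auto simp: quarter_power)
    note gG = norm_integral_mult_cnj_E_le[OF gG_measurable _ this]
    have int: "integrable M (\<lambda>x. (g x - G x) * cnj (E l x))"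
      and small: "cmod (\<integral>x. (g x - G x) * cnj (E l x) \<partial>M) \<le> (1/2)^k"
      using gG by auto
    have "cmod (coeff f l) \<le> (1/2)^k" if "l \<notin> F k"
      using tails[of "{l}" k] l that by (auto simp: quarter_power intro: power2_le_imp_le)
    then have fG: "cmod (coeff (\<lambda>x. f x - G x) l) \<le> (1/2)^k"
      unfolding G_def using F l by (intro norm_coeff_partial_expansion_remainder_le f) auto
    have "coeff (\<lambda>x. f x - g x) l = coeff (\<lambda>x. f x - G x) l - (\<integral>x. (g x - G x) * cnj (E l x) \<partial>M)"
      unfolding coeff_def using int
      by (subst Bochner_Integration.integral_diff[symmetric])
         (auto simp: algebra_simps intro!: integrable_bounded_measurable bounded_measurable_intros f G)
    also have "cmod \<dots> \<le> cmod (coeff (\<lambda>x. f x - G x) l) + cmod (\<integral>x. (g x - G x) * cnj (E l x) \<partial>M)"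
      by (rule norm_triangle_ineq4)
    finally show ?thesis
      using fG small by simp
  qed
  have "(\<lambda>k. 2 * (1/2::real)^k) \<longlonglongrightarrow> 0"
    by (intro tendsto_mult_right_zero LIMSEQ_power_zero) simp
  then have "cmod (coeff (\<lambda>x. f x - g x) l) \<le> 0"
    by (rule LIMSEQ_le_const) (use bound in auto)
  then show ?thesis
    by simp
qed

end

locale complete_orthonormal_system = orthonormal_system +
  assumes complete: "\<And>h. h \<in> borel_measurable M \<Longrightarrow> integrable M (\<lambda>x. (cmod (h x))\<^sup>2) \<Longrightarrow>
      (\<And>l. l \<in> \<Lambda> \<Longrightarrow> (\<integral>x. h x * cnj (E l x) \<partial>M) = 0) \<Longrightarrow> AE x in M. h x = 0"
begin

lemma partial_expansions_converge:
  assumes f: "bounded_measurable M f"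
    and F: "\<And>k. finite (F k)" "\<And>k. F k \<subseteq> \<Lambda>" "incseq F"
    and tails: "\<And>k H. finite H \<Longrightarrow> H \<subseteq> \<Lambda> \<Longrightarrow> H \<inter> F k = {} \<Longrightarrow> (\<Sum>l\<in>H. (cmod (coeff f l))\<^sup>2) \<le> (1/4)^k"
  shows "(\<integral>x. (cmod (f x - (\<Sum>l\<in>F k. coeff f l * E l x)))\<^sup>2 \<partial>M) \<le> (1/4)^k"
proof -
  have [measurable]: "f \<in> borel_measurable M"
    using f by (simp add: bounded_measurable_def)
  have "(\<lambda>x. \<Sum>l\<in>F k. coeff f l * E l x) \<in> borel_measurable M" for k
    by measurable
  then obtain g where [measurable]: "g \<in> borel_measurable M"
    and g: "\<And>k. L2_sq M (\<lambda>x. g x - (\<Sum>l\<in>F k. coeff f l * E l x)) \<le> ennreal ((1/4)^k)"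
    using fast_L2_Cauchy_has_limit[OF _ L2_sq_diff_sums_le[OF F tails]] by blast
  define G where "G k x = (\<Sum>l\<in>F k. coeff f l * E l x)" for k x
  have G: "bounded_measurable M (G k)" for k
    unfolding G_def by (intro bounded_measurable_intros)
  then have [measurable]: "G k \<in> borel_measurable M" for k
    by (simp add: bounded_measurable_def)
  have "integrable M (\<lambda>x. (cmod (f x - g x))\<^sup>2)"
  proof -
    have "L2_sq M (\<lambda>x. (f x - G 0 x) - (g x - G 0 x))
        \<le> 2 * L2_sq M (\<lambda>x. f x - G 0 x) + 2 * L2_sq M (\<lambda>x. g x - G 0 x)"
      by (rule L2_sq_diff_le) measurable
    also have "\<dots> < \<infinity>"
      using g[of 0, folded G_def] by (simp add: L2_sq_bounded_measurable bounded_measurable_diff[OF f G]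
          ennreal_mult_less_top le_less_trans)
    finally show ?thesis
      unfolding L2_sq_def by (subst integrable_iff_bounded) auto
  qed
  moreover have "coeff (\<lambda>x. f x - g x) l = 0" if "l \<in> \<Lambda>" for l
    using f F(1,2) tails _ g that by (rule coeff_remainder_L2_limit_eq_0) measurable
  ultimately have "AE x in M. f x - g x = 0"
    by (intro complete) (auto simp: coeff_def)
  then have "L2_sq M (\<lambda>x. f x - G k x) = L2_sq M (\<lambda>x. g x - G k x)"
    unfolding L2_sq_def by (intro nn_integral_cong_AE) auto
  then have "ennreal (\<integral>x. (cmod (f x - G k x))\<^sup>2 \<partial>M) \<le> ennreal ((1/4)^k)"
    using g[of k, folded G_def] by (simp add: L2_sq_bounded_measurable bounded_measurable_diff[OF f G])
  then show ?thesis
    unfolding G_def by (simp add: ennreal_le_iff)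
qed

theorem parseval:
  assumes f: "bounded_measurable M f"
  shows "((\<lambda>l. (cmod (coeff f l))\<^sup>2) has_sum (\<integral>x. (cmod (f x))\<^sup>2 \<partial>M)) \<Lambda>"
proof -
  define w where "w l = (cmod (coeff f l))\<^sup>2" for l
  define A where "A = (\<integral>x. (cmod (f x))\<^sup>2 \<partial>M)"
  have w_nonneg: "0 \<le> w l" for l
    by (simp add: w_def)
  have bessel: "finite F \<Longrightarrow> F \<subseteq> \<Lambda> \<Longrightarrow> sum w F \<le> A" for F
    unfolding w_def A_def by (rule bessel_inequality[OF f])
  have summable: "w summable_on \<Lambda>"
    using bessel by (intro nonneg_bdd_above_summable_on w_nonneg) (auto simp: bdd_above_def)
  obtain F where F: "\<And>k. finite (F k)" "\<And>k. F k \<subseteq> \<Lambda>" "incseq F"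
    and tails: "\<And>k H. finite H \<Longrightarrow> H \<subseteq> \<Lambda> \<Longrightarrow> H \<inter> F k = {} \<Longrightarrow> sum w H \<le> (1/4)^k"
    using nonneg_summable_on_nested_small_tails[OF summable w_nonneg] by blast
  have approx: "A \<le> infsum w \<Lambda> + (1/4)^k" for k
  proof -
    have "A - sum w (F k) = (\<integral>x. (cmod (f x - (\<Sum>l\<in>F k. coeff f l * E l x)))\<^sup>2 \<partial>M)"
      unfolding A_def w_def by (rule integral_sq_norm_diff_partial_expansion[OF f F(1,2), symmetric])
    also have "\<dots> \<le> (1/4)^k"
      by (rule partial_expansions_converge[OF f F tails[unfolded w_def]])
    finally have "A - sum w (F k) \<le> (1/4)^k" .
    moreover have "infsum w (F k) \<le> infsum w \<Lambda>"
      by (rule infsum_mono2[OF summable_on_finite[OF F(1)] summable F(2) w_nonneg])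
    ultimately show ?thesis
      using F(1) by simp
  qed
  have "(\<lambda>k. infsum w \<Lambda> + (1/4::real)^k) \<longlonglongrightarrow> infsum w \<Lambda> + 0"
    by (intro tendsto_add tendsto_const LIMSEQ_power_zero) simp
  then have "A \<le> infsum w \<Lambda>"
    using LIMSEQ_le_const approx by fastforce
  moreover have "infsum w \<Lambda> \<le> A"
    by (rule infsum_le_finite_sums[OF summable bessel])
  ultimately show ?thesis
    using has_sum_infsum[OF summable] unfolding A_def w_def by simp
qed

end

section \<open>Invariant measures of affine iterated function systems\<close>

lemma continuous_on_tau: "continuous_on A (tau R b)"
  unfolding tau_def divide_inverse by (intro continuous_intros)

lemma borel_measurable_tau[measurable]: "tau R b \<in> borel_measurable borel"
  by (rule borel_measurable_continuous_onI[OF continuous_on_tau])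

lemma vimage_tau_measurable[measurable]: "A \<in> sets borel \<Longrightarrow> tau R b -` A \<in> sets borel"
  using measurable_sets[OF borel_measurable_tau, of A] by simp

lemma dist_tau: "dist (tau R b x) (tau R b y) = dist x y / \<bar>R\<bar>"
  unfolding tau_def dist_real_def by (simp add: diff_divide_distrib[symmetric] abs_divide)

lemma borel_measurable_infdist[measurable]: "(\<lambda>x. infdist x S) \<in> borel_measurable borel"
  by (intro borel_measurable_continuous_onI continuous_intros)

definition ramp :: "real \<Rightarrow> nat \<Rightarrow> real \<Rightarrow> real" where
  "ramp a n x = max 0 (min 1 (1 - real (Suc n) * (x - a)))"

lemma continuous_on_ramp: "continuous_on A (ramp a n)"
  unfolding ramp_def by (intro continuous_intros)

lemma ramp_tendsto_indicator: "(\<lambda>n. ramp a n x) \<longlonglongrightarrow> indicator {..a} x"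
proof (cases "x \<le> a")
  case True
  then have "ramp a n x = 1" for n
    unfolding ramp_def using mult_nonneg_nonpos[of "real (Suc n)" "x - a"] by auto
  then show ?thesis using True by simp
next
  case False
  then obtain N where N: "1 < real N * (x - a)"
    using ex_less_of_nat_mult[of "x - a"] by auto
  have "ramp a n x = 0" if "N \<le> n" for n
  proof -
    have "real N * (x - a) \<le> real (Suc n) * (x - a)"
      using False that by (intro mult_right_mono) auto
    with N show ?thesis unfolding ramp_def by auto
  qed
  then have "(\<lambda>n. ramp a n x) \<longlonglongrightarrow> 0"
    by (intro tendsto_eventually eventually_sequentiallyI)
  then show ?thesis using False by simp
qed

locale ifs = prob_space M for M :: "real measure" +
  fixes R :: real and B :: "real set" and p :: "real \<Rightarrow> real" and X :: "real set"
  assumes expanding: "\<bar>R\<bar> > 1"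
    and finite_B: "finite B"
    and p_pos: "\<And>b. b \<in> B \<Longrightarrow> 0 < p b"
    and sum_p: "(\<Sum>b\<in>B. p b) = 1"
    and attractor: "ifs_attractor R B X"
    and invariant: "ifs_invariant_measure R B p M"
begin

lemma sets_M[simp, measurable_cong]: "sets M = sets borel"
  using invariant unfolding ifs_invariant_measure_def by auto

lemma space_M[simp]: "space M = UNIV"
  using sets_eq_imp_space_eq[OF sets_M] by simp

lemma integral_invariant:
  "continuous_on UNIV f \<Longrightarrow> (\<integral>x. f x \<partial>M) = (\<Sum>b\<in>B. p b * (\<integral>x. f (tau R b x) \<partial>M))"
  using invariant unfolding ifs_invariant_measure_def by auto

lemma integral_ramp_tendsto:
  assumes [measurable]: "g \<in> borel_measurable borel"
  shows "(\<lambda>n. \<integral>x. ramp a n (g x) \<partial>M) \<longlonglongrightarrow> measure M (g -` {..a})"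
proof -
  have [measurable]: "ramp a n \<in> borel_measurable borel" for n
    by (rule borel_measurable_continuous_onI[OF continuous_on_ramp])
  have "(\<lambda>n. \<integral>x. ramp a n (g x) \<partial>M) \<longlonglongrightarrow> (\<integral>x. indicator {..a} (g x) \<partial>M)"
    using ramp_tendsto_indicator
    by (intro integral_dominated_convergence[where w="\<lambda>_. 1"]) (auto simp: ramp_def)
  also have "(\<integral>x. indicator {..a} (g x) \<partial>M) = (\<integral>x. indicator (g -` {..a}) x \<partial>M)"
    by (simp add: indicator_def)
  also have "\<dots> = measure M (g -` {..a})"
    by simp
  finally show ?thesis .
qed

lemma measure_invariant_atMost:
  "measure M {..a} = (\<Sum>b\<in>B. p b * measure M (tau R b -` {..a}))"
proof -
  have "(\<lambda>n. \<integral>x. ramp a n x \<partial>M) \<longlonglongrightarrow> measure M {..a}"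
    using integral_ramp_tendsto[of "\<lambda>x. x" a] by simp
  moreover have "(\<lambda>n. \<integral>x. ramp a n x \<partial>M) = (\<lambda>n. \<Sum>b\<in>B. p b * (\<integral>x. ramp a n (tau R b x) \<partial>M))"
    by (intro ext integral_invariant continuous_on_ramp)
  moreover have "(\<lambda>n. \<Sum>b\<in>B. p b * (\<integral>x. ramp a n (tau R b x) \<partial>M))
      \<longlonglongrightarrow> (\<Sum>b\<in>B. p b * measure M (tau R b -` {..a}))"
    by (intro tendsto_sum tendsto_mult_left integral_ramp_tendsto borel_measurable_tau)
  ultimately show ?thesis
    using LIMSEQ_unique by fastforce
qed

lemma measure_invariant_Diff:
  assumes [measurable]: "A \<in> sets borel"
    and A: "measure M A = (\<Sum>b\<in>B. p b * measure M (tau R b -` A))"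
  shows "measure M (UNIV - A) = (\<Sum>b\<in>B. p b * measure M (tau R b -` (UNIV - A)))"
proof -
  have "measure M (UNIV - A) = (\<Sum>b\<in>B. p b) - (\<Sum>b\<in>B. p b * measure M (tau R b -` A))"
    using prob_compl[of A] A sum_p by simp
  also have "\<dots> = (\<Sum>b\<in>B. p b * measure M (tau R b -` (UNIV - A)))"
    using prob_compl[of "tau R b -` A" for b]
    by (simp add: vimage_Diff right_diff_distrib sum_subtractf)
  finally show ?thesis .
qed

lemma measure_invariant_UN:
  fixes A :: "nat \<Rightarrow> real set"
  assumes "disjoint_family A" and [measurable]: "\<And>i. A i \<in> sets borel"
    and A: "\<And>i. measure M (A i) = (\<Sum>b\<in>B. p b * measure M (tau R b -` A i))"
  shows "measure M (\<Union>i. A i) = (\<Sum>b\<in>B. p b * measure M (tau R b -` (\<Union>i. A i)))"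
proof -
  have "(\<lambda>i. measure M (tau R b -` A i)) sums measure M (tau R b -` (\<Union>i. A i))" for b
    using assms(1) unfolding vimage_UN
    by (intro finite_measure_UNION) (auto simp: disjoint_family_on_def)
  then have "(\<lambda>i. \<Sum>b\<in>B. p b * measure M (tau R b -` A i))
      sums (\<Sum>b\<in>B. p b * measure M (tau R b -` (\<Union>i. A i)))"
    by (intro sums_sum sums_mult)
  moreover have "(\<lambda>i. measure M (A i)) sums measure M (\<Union>i. A i)"
    using assms(1) by (intro finite_measure_UNION) auto
  ultimately show ?thesis
    using A sums_unique2 by auto
qed

text \<open>The half-lines \<open>{..a}\<close> form an intersection-stable generator of the Borel sets.\<close>

lemma measure_invariant:
  assumes "A \<in> sets borel"
  shows "measure M A = (\<Sum>b\<in>B. p b * measure M (tau R b -` A))"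
proof -
  have generator: "sets borel = sigma_sets UNIV (range (\<lambda>a::real. {..a}))"
    by (subst borel_eq_atMost) (simp add: sets_measure_of)
  have "Int_stable (range (\<lambda>a::real. {..a}))"
    by (auto simp: Int_stable_def)
  moreover have "range (\<lambda>a::real. {..a}) \<subseteq> Pow UNIV"
    by auto
  moreover have "A \<in> sigma_sets UNIV (range (\<lambda>a::real. {..a}))"
    using assms generator by simp
  ultimately show ?thesis
  proof (induction rule: sigma_sets_induct_disjoint)
    case (basic A)
    then show ?case using measure_invariant_atMost by auto
  next
    case empty
    then show ?case by simp
  next
    case (compl A)
    then show ?case using generator by (intro measure_invariant_Diff) auto
  next
    case (union A)
    then show ?case using generator by (intro measure_invariant_UN) auto
  qed
qed

lemma attractor_nonempty: "X \<noteq> {}"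
  and compact_attractor: "compact X"
  and tau_attractor_subset: "b \<in> B \<Longrightarrow> tau R b ` X \<subseteq> X"
  using attractor unfolding ifs_attractor_def by auto

lemma infdist_tau_le:
  assumes "b \<in> B"
  shows "\<bar>R\<bar> * infdist (tau R b x) X \<le> infdist x X"
proof -
  have "\<bar>R\<bar> * infdist (tau R b x) X \<le> dist x y" if "y \<in> X" for y
  proof -
    have "infdist (tau R b x) X \<le> dist (tau R b x) (tau R b y)"
      using tau_attractor_subset[OF assms] that by (intro infdist_le) auto
    then show ?thesis
      using expanding by (simp add: dist_tau field_simps)
  qed
  then show ?thesis
    unfolding infdist_notempty[OF attractor_nonempty] by (intro cINF_greatest attractor_nonempty) auto
qed

definition far :: "real \<Rightarrow> real set" where
  "far t = {x. t \<le> infdist x X}"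

lemma far_measurable[measurable]: "far t \<in> sets borel"
  unfolding far_def by measurable

lemma far_antimono: "s \<le> t \<Longrightarrow> far t \<subseteq> far s"
  unfolding far_def by auto

text \<open>Since each \<open>\<tau>\<^sub>b\<close> contracts distances to \<open>X\<close> by the factor \<open>|R|\<close>, invariance pushes the
  mass of \<open>far t\<close> ever further away from \<open>X\<close>.\<close>

lemma measure_far_le: "measure M (far t) \<le> measure M (far (\<bar>R\<bar> * t))"
proof -
  have "tau R b -` far t \<subseteq> far (\<bar>R\<bar> * t)" if "b \<in> B" for b
    using infdist_tau_le[OF that] expanding unfolding far_def
    by (auto intro: order_trans[OF mult_left_mono])
  then have "(\<Sum>b\<in>B. p b * measure M (tau R b -` far t)) \<le> (\<Sum>b\<in>B. p b * measure M (far (\<bar>R\<bar> * t)))"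
    using p_pos by (intro sum_mono mult_left_mono finite_measure_mono) (auto simp: less_imp_le)
  then show ?thesis
    using measure_invariant[of "far t"] sum_p by (simp add: sum_distrib_right[symmetric])
qed

lemma measure_far_eq_0:
  assumes "t > 0"
  shows "measure M (far t) = 0"
proof -
  have le: "measure M (far t) \<le> measure M (far (\<bar>R\<bar>^n * t))" for n
  proof (induction n)
    case (Suc n)
    then show ?case using measure_far_le[of "\<bar>R\<bar>^n * t"] by (simp add: mult.assoc)
  qed simp
  have "decseq (\<lambda>n. far (\<bar>R\<bar>^n * t))"
    using expanding assms by (intro decseq_SucI far_antimono mult_right_mono power_increasing) auto
  then have "(\<lambda>n. measure M (far (\<bar>R\<bar>^n * t))) \<longlonglongrightarrow> measure M (\<Inter>n. far (\<bar>R\<bar>^n * t))"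
    by (rule finite_Lim_measure_decseq[rotated]) auto
  moreover have "(\<Inter>n. far (\<bar>R\<bar>^n * t)) = {}"
  proof -
    have "x \<notin> (\<Inter>n. far (\<bar>R\<bar>^n * t))" for x
    proof -
      obtain n where "infdist x X / t < \<bar>R\<bar>^n"
        using real_arch_pow[OF expanding] by blast
      then have "x \<notin> far (\<bar>R\<bar>^n * t)"
        using assms by (simp add: far_def field_simps)
      then show ?thesis
        by blast
    qed
    then show ?thesis
      by blast
  qed
  ultimately have "(\<lambda>n. measure M (far (\<bar>R\<bar>^n * t))) \<longlonglongrightarrow> 0"
    by simp
  then have "measure M (far t) \<le> 0"
    by (rule LIMSEQ_le_const) (use le in auto)
  then show ?thesis
    using measure_nonneg[of M "far t"] by linarith
qed

lemma AE_in_attractor: "AE x in M. x \<in> X"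
proof -
  have "AE x in M. x \<notin> far (1 / Suc n)" for n
    by (rule AE_I[of _ _ "far (1 / Suc n)"]) (auto simp: emeasure_eq_measure measure_far_eq_0)
  then have "AE x in M. \<forall>n. x \<notin> far (1 / Suc n)"
    by (simp add: AE_all_countable)
  then show ?thesis
  proof eventually_elim
    case (elim x)
    show "x \<in> X"
    proof (rule ccontr)
      assume "x \<notin> X"
      then have "infdist x X > 0"
        using compact_imp_closed[OF compact_attractor] attractor_nonempty
        by (intro infdist_pos_not_in_closed)
      then obtain n where "1 / real (Suc n) < infdist x X"
        using nat_approx_posE by blast
      with elim[rule_format, of n] show False
        unfolding far_def by (simp add: not_le)
    qed
  qed
qed

lemma closed_piece: "closed (tau R b ` X)"
  by (intro compact_imp_closed compact_continuous_image continuous_on_tau compact_attractor)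

lemma piece_measurable[measurable]: "tau R b ` X \<in> sets borel"
  by (rule borel_closed[OF closed_piece])

lemma measure_vimage_tau_Int_piece:
  assumes [measurable]: "S \<in> sets borel"
  shows "measure M (tau R c -` (S \<inter> tau R c ` X)) = measure M (tau R c -` S)"
  by (rule measure_eq_AE) (use AE_in_attractor in \<open>auto elim!: eventually_mono\<close>)

end

locale ifs_no_overlap = ifs +
  assumes no_overlap: "\<And>b b'. b \<in> B \<Longrightarrow> b' \<in> B \<Longrightarrow> b \<noteq> b' \<Longrightarrow>
    measure M (tau R b ` X \<inter> tau R b' ` X) = 0"
begin

lemma measure_vimage_tau_other_piece:
  assumes "b \<in> B" "c \<in> B" "c \<noteq> b"
  shows "measure M (tau R c -` (tau R b ` X)) = 0"
proof -
  have "(\<Sum>d\<in>B. p d * measure M (tau R d -` (tau R b ` X \<inter> tau R c ` X))) = 0"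
    using measure_invariant[of "tau R b ` X \<inter> tau R c ` X"] no_overlap assms by simp
  then have "p c * measure M (tau R c -` (tau R b ` X \<inter> tau R c ` X)) = 0"
    using p_pos finite_B assms by (subst (asm) sum_nonneg_eq_0_iff) (auto simp: less_imp_le)
  then show ?thesis
    using p_pos[OF assms(2)] measure_vimage_tau_Int_piece[of "tau R b ` X" c] by simp
qed

lemma measure_Int_piece:
  assumes b: "b \<in> B" and [measurable]: "E \<in> sets borel"
  shows "measure M (E \<inter> tau R b ` X) = p b * measure M (tau R b -` E)"
proof -
  have "measure M (tau R c -` (E \<inter> tau R b ` X)) = 0" if "c \<in> B" "c \<noteq> b" for c
  proof -
    have "measure M (tau R c -` (E \<inter> tau R b ` X)) \<le> measure M (tau R c -` (tau R b ` X))"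
      by (intro finite_measure_mono) auto
    then show ?thesis
      using measure_vimage_tau_other_piece[OF b that]
        measure_nonneg[of M "tau R c -` (E \<inter> tau R b ` X)"] by linarith
  qed
  then have "(\<Sum>c\<in>B. p c * measure M (tau R c -` (E \<inter> tau R b ` X)))
      = (\<Sum>c\<in>B. if c = b then p b * measure M (tau R b -` E) else 0)"
    using measure_vimage_tau_Int_piece[of E b] by (intro sum.cong) auto
  then show ?thesis
    using measure_invariant[of "E \<inter> tau R b ` X"] b finite_B by simp
qed

lemma integral_indicator_piece:
  fixes h :: "real \<Rightarrow> complex"
  assumes b: "b \<in> B" and [measurable]: "h \<in> borel_measurable borel"
  shows "(\<integral>x. indicator (tau R b ` X) x *\<^sub>R h x \<partial>M) = p b *\<^sub>R (\<integral>x. h (tau R b x) \<partial>M)"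
proof -
  have p: "0 \<le> p b"
    using p_pos[OF b] by simp
  define \<nu> where "\<nu> = density M (\<lambda>x. ennreal (indicator (tau R b ` X) x))"
  have \<nu>_eq: "\<nu> = density (distr M borel (tau R b)) (\<lambda>_. ennreal (p b))"
  proof (rule measure_eqI)
    fix E assume "E \<in> sets \<nu>"
    then have [measurable]: "E \<in> sets borel"
      by (simp add: \<nu>_def)
    have "emeasure \<nu> E = emeasure M (E \<inter> tau R b ` X)"
      unfolding \<nu>_def by (subst emeasure_density) (auto intro!: nn_integral_cong
          simp: indicator_def simp flip: nn_integral_indicator)
    also have "\<dots> = ennreal (p b * measure M (tau R b -` E))"
      by (simp add: emeasure_eq_measure measure_Int_piece[OF b])
    also have "\<dots> = emeasure (density (distr M borel (tau R b)) (\<lambda>_. ennreal (p b))) E"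
      by (simp add: emeasure_density_const emeasure_distr emeasure_eq_measure ennreal_mult p)
    finally show "emeasure \<nu> E = emeasure (density (distr M borel (tau R b)) (\<lambda>_. ennreal (p b))) E" .
  qed (simp add: \<nu>_def)
  have "(\<integral>x. indicator (tau R b ` X) x *\<^sub>R h x \<partial>M) = integral\<^sup>L \<nu> h"
    unfolding \<nu>_def by (rule integral_density[symmetric]) auto
  also have "\<dots> = (\<integral>x. p b *\<^sub>R h x \<partial>distr M borel (tau R b))"
    unfolding \<nu>_eq by (rule integral_density) (auto simp: p)
  also have "\<dots> = p b *\<^sub>R (\<integral>x. h (tau R b x) \<partial>M)"
    by (simp add: integral_distr)
  finally show ?thesis .
qed

end

section \<open>Spectral invariant measures\<close>

lemma norm_e_exp[simp]: "cmod (e_exp l x) = 1"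
  unfolding e_exp_def by (simp add: norm_exp_eq_Re)

lemma borel_measurable_e_exp[measurable]: "e_exp l \<in> borel_measurable borel"
  unfolding e_exp_def by (intro borel_measurable_continuous_onI continuous_intros)

lemma e_exp_tau: "R \<noteq> 0 \<Longrightarrow> e_exp l (tau R b x) = e_exp (l / R) x * e_exp (l / R) b"
  unfolding e_exp_def tau_def by (simp add: exp_add[symmetric] algebra_simps add_divide_distrib)

lemma (in ifs) complete_orthonormal_system_if_spectral:
  assumes "spectral_measure M"
  obtains \<Lambda> where "complete_orthonormal_system M e_exp \<Lambda>"
proof -
  from assms obtain \<Lambda> where
    "\<forall>l\<in>\<Lambda>. \<forall>l'\<in>\<Lambda>. l \<noteq> l' \<longrightarrow> (\<integral>x. e_exp l x * cnj (e_exp l' x) \<partial>M) = 0"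
    "\<forall>f. f \<in> borel_measurable M \<and> integrable M (\<lambda>x. (cmod (f x))\<^sup>2) \<and>
       (\<forall>l\<in>\<Lambda>. (\<integral>x. f x * cnj (e_exp l x) \<partial>M) = 0) \<longrightarrow> (AE x in M. f x = 0)"
    unfolding spectral_measure_def by blast
  then have "complete_orthonormal_system M e_exp \<Lambda>"
    by unfold_locales auto
  then show ?thesis ..
qed

lemma (in ifs_no_overlap) has_sum_sq_norm_fourier:
  assumes "complete_orthonormal_system M e_exp \<Lambda>" and b: "b \<in> B"
  shows "((\<lambda>l. (cmod (\<integral>x. cnj (e_exp (l / R) x) \<partial>M))\<^sup>2) has_sum (1 / p b)) \<Lambda>"
proof -
  interpret complete_orthonormal_system M e_exp \<Lambda> by (fact assms)
  define f where "f x = complex_of_real (indicator (tau R b ` X) x)" for x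
  have p: "0 < p b"
    using p_pos[OF b] .
  have "bounded_measurable M f"
    unfolding bounded_measurable_def f_def by (auto intro!: exI[of _ 1])
  then have "((\<lambda>l. (cmod (coeff f l))\<^sup>2) has_sum (\<integral>x. (cmod (f x))\<^sup>2 \<partial>M)) \<Lambda>"
    by (rule parseval)
  moreover have "(\<integral>x. (cmod (f x))\<^sup>2 \<partial>M) = p b"
  proof -
    have "(\<integral>x. (cmod (f x))\<^sup>2 \<partial>M) = (\<integral>x. indicator (tau R b ` X) x \<partial>M)"
      unfolding f_def by (intro Bochner_Integration.integral_cong) (auto simp: indicator_def)
    also have "\<dots> = measure M (UNIV \<inter> tau R b ` X)"
      by simp
    finally show ?thesis
      using measure_Int_piece[OF b, of UNIV] prob_space by simp
  qed
  moreover have "(cmod (coeff f l))\<^sup>2 = (p b)\<^sup>2 * (cmod (\<integral>x. cnj (e_exp (l / R) x) \<partial>M))\<^sup>2" for l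
  proof -
    have "coeff f l = p b *\<^sub>R (\<integral>x. cnj (e_exp l (tau R b x)) \<partial>M)"
      unfolding coeff_def f_def by (simp add: scaleR_conv_of_real[symmetric] integral_indicator_piece[OF b])
    also have "\<dots> = p b *\<^sub>R (cnj (e_exp (l / R) b) * (\<integral>x. cnj (e_exp (l / R) x) \<partial>M))"
      using expanding by (auto simp: e_exp_tau mult.commute)
    finally show ?thesis
      using p by (simp add: norm_mult power_mult_distrib)
  qed
  ultimately have "((\<lambda>l. (p b)\<^sup>2 * (cmod (\<integral>x. cnj (e_exp (l / R) x) \<partial>M))\<^sup>2) has_sum p b) \<Lambda>"
    by simp
  then show ?thesis
    using p by (subst (asm) has_sum_cmult_right_iff) (auto simp: power2_eq_square)
qed

theorem proposition3p3:
  fixes R :: real and B :: "real set" and p :: "real \<Rightarrow> real"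
    and X :: "real set" and \<mu> :: "real measure"
  assumes R: "\<bar>R\<bar> > 1"
    and B: "finite B" "0 \<in> B"
    and p: "\<forall>b\<in>B. 0 < p b \<and> p b < 1" "(\<Sum>b\<in>B. p b) = 1"
    and X: "ifs_attractor R B X"
    and mu: "ifs_invariant_measure R B p \<mu>"
    and spec: "spectral_measure \<mu>"
    and no_overlap: "\<forall>b\<in>B. \<forall>b'\<in>B. b \<noteq> b' \<longrightarrow>
                       measure \<mu> (tau R b ` X \<inter> tau R b' ` X) = 0"
  shows "\<forall>b\<in>B. p b = 1 / real (card B)"
proof -
  interpret ifs_no_overlap \<mu> R B p X
  proof (intro ifs_no_overlap.intro ifs.intro ifs_axioms.intro ifs_no_overlap_axioms.intro)
    show "prob_space \<mu>"
      using mu unfolding ifs_invariant_measure_def by blast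
  qed (use R B(1) p X mu no_overlap in auto)
  obtain \<Lambda> where \<Lambda>: "complete_orthonormal_system \<mu> e_exp \<Lambda>"
    using complete_orthonormal_system_if_spectral[OF spec] .
  have "1 / p b = 1 / p 0" if "b \<in> B" for b
    using has_sum_unique[OF has_sum_sq_norm_fourier[OF \<Lambda> that] has_sum_sq_norm_fourier[OF \<Lambda> B(2)]] .
  then have p_const: "p b = p 0" if "b \<in> B" for b
    using that by simp
  then have "real (card B) * p 0 = 1"
    using p(2) by simp
  then have "p 0 = 1 / real (card B)"
    by (cases "card B = 0") (auto simp: field_simps)
  then show ?thesis
    using p_const by simp
qed

end
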